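(* Let $\varphi : X \to X$ be a morphism in $\mathscr{C}$ and let $n\geq 2$ be an integer. Then $\varphi$ is core invertible if and only if there exists an annihilator $\eta : N\to X$ of $\varphi$ such that $\mu=\varphi^{n}+\eta^{*}\eta : X\to X$ is invertible. In this case $$\varphi^{\mathrm{core}}=\varphi^{n-1}\mu^{-1}.$$
   Context: $\mathscr{C}$ is an additive category with an involution $*$: a map on morphisms sending $\varphi : X\to Y$ to $\varphi^* : Y \to X$ such that $(\varphi^* )^*=\varphi$, $(\varphi\psi)^*=\psi^*\varphi^*$ and $(\varphi+\phi)^*=\varphi^*+\phi^*$. Composition is written left to right: for $\varphi : X\to Y$ and $\psi : Y\to Z$, $\varphi\psi : X \to Z$ means "first $\varphi$, then $\psi$". An annihilator of $\varphi : X\to Y$ is any morphism $\eta : N\to X$, for any object $N$, with $\eta\varphi=0$. A morphism is invertible if it has a two-sided inverse. For $\varphi : X\to X$, a core inverse of $\varphi$ is a morphism $\chi : X\to X$ with $(\varphi\chi)^*=\varphi\chi$, $\varphi\chi^2=\chi$ and $\chi\varphi^2=\varphi$. It is unique when it exists and is denoted $\varphi^{\mathrm{core}}$. *)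

theory Defs
  imports Main
begin

text \<open>An additive category with involution, given concretely.
  Composition is diagrammatic: Comp f g means first f, then g.\<close>

record ('o, 'm) icat =
  Ob   :: "'o set"
  Mor  :: "'m set"
  Dom  :: "'m \<Rightarrow> 'o"
  Cod  :: "'m \<Rightarrow> 'o"
  Comp :: "'m \<Rightarrow> 'm \<Rightarrow> 'm"
  Idm  :: "'o \<Rightarrow> 'm"
  Add  :: "'m \<Rightarrow> 'm \<Rightarrow> 'm"
  Zero :: "'o \<Rightarrow> 'o \<Rightarrow> 'm"
  Neg  :: "'m \<Rightarrow> 'm"
  Star :: "'m \<Rightarrow> 'm"

definition Hom :: "('o, 'm) icat \<Rightarrow> 'o \<Rightarrow> 'o \<Rightarrow> 'm set" where
  "Hom C X Y = {f \<in> Mor C. Dom C f = X \<and> Cod C f = Y}"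

definition is_category :: "('o, 'm) icat \<Rightarrow> bool" where
  "is_category C \<longleftrightarrow>
     (\<forall>f \<in> Mor C. Dom C f \<in> Ob C \<and> Cod C f \<in> Ob C)
   \<and> (\<forall>X \<in> Ob C. Idm C X \<in> Hom C X X)
   \<and> (\<forall>f \<in> Mor C. \<forall>g \<in> Mor C. Cod C f = Dom C g \<longrightarrow>
          Comp C f g \<in> Hom C (Dom C f) (Cod C g))
   \<and> (\<forall>f \<in> Mor C. \<forall>g \<in> Mor C. \<forall>h \<in> Mor C. Cod C f = Dom C g \<longrightarrow> Cod C g = Dom C h \<longrightarrow>
          Comp C (Comp C f g) h = Comp C f (Comp C g h))
   \<and> (\<forall>f \<in> Mor C. Comp C (Idm C (Dom C f)) f = f \<and> Comp C f (Idm C (Cod C f)) = f)"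

definition is_preadditive :: "('o, 'm) icat \<Rightarrow> bool" where
  "is_preadditive C \<longleftrightarrow> is_category C
   \<and> (\<forall>X \<in> Ob C. \<forall>Y \<in> Ob C.
        Zero C X Y \<in> Hom C X Y
      \<and> (\<forall>f \<in> Hom C X Y. \<forall>g \<in> Hom C X Y. Add C f g \<in> Hom C X Y)
      \<and> (\<forall>f \<in> Hom C X Y. Neg C f \<in> Hom C X Y)
      \<and> (\<forall>f \<in> Hom C X Y. \<forall>g \<in> Hom C X Y. \<forall>h \<in> Hom C X Y.
            Add C (Add C f g) h = Add C f (Add C g h))
      \<and> (\<forall>f \<in> Hom C X Y. \<forall>g \<in> Hom C X Y. Add C f g = Add C g f)
      \<and> (\<forall>f \<in> Hom C X Y. Add C (Zero C X Y) f = f)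
      \<and> (\<forall>f \<in> Hom C X Y. Add C (Neg C f) f = Zero C X Y))
   \<and> (\<forall>f \<in> Mor C. \<forall>g \<in> Mor C. \<forall>h \<in> Mor C.
        Dom C f = Dom C g \<longrightarrow> Cod C f = Cod C g \<longrightarrow> Cod C f = Dom C h \<longrightarrow>
          Comp C (Add C f g) h = Add C (Comp C f h) (Comp C g h))
   \<and> (\<forall>f \<in> Mor C. \<forall>g \<in> Mor C. \<forall>h \<in> Mor C.
        Dom C g = Dom C h \<longrightarrow> Cod C g = Cod C h \<longrightarrow> Cod C f = Dom C g \<longrightarrow>
          Comp C f (Add C g h) = Add C (Comp C f g) (Comp C f h))"

definition is_additive :: "('o, 'm) icat \<Rightarrow> bool" where
  "is_additive C \<longleftrightarrow> is_preadditive C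
   \<and> (\<exists>Z \<in> Ob C. Idm C Z = Zero C Z Z)
   \<and> (\<forall>X \<in> Ob C. \<forall>Y \<in> Ob C. \<exists>P \<in> Ob C. \<exists>i1 i2 p1 p2.
        i1 \<in> Hom C X P \<and> i2 \<in> Hom C Y P \<and> p1 \<in> Hom C P X \<and> p2 \<in> Hom C P Y
      \<and> Comp C i1 p1 = Idm C X \<and> Comp C i2 p2 = Idm C Y
      \<and> Comp C i1 p2 = Zero C X Y \<and> Comp C i2 p1 = Zero C Y X
      \<and> Add C (Comp C p1 i1) (Comp C p2 i2) = Idm C P)"

definition is_involutive_additive :: "('o, 'm) icat \<Rightarrow> bool" where
  "is_involutive_additive C \<longleftrightarrow> is_additive C
   \<and> (\<forall>f \<in> Mor C. Star C f \<in> Hom C (Cod C f) (Dom C f))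
   \<and> (\<forall>f \<in> Mor C. Star C (Star C f) = f)
   \<and> (\<forall>f \<in> Mor C. \<forall>g \<in> Mor C. Cod C f = Dom C g \<longrightarrow>
        Star C (Comp C f g) = Comp C (Star C g) (Star C f))
   \<and> (\<forall>f \<in> Mor C. \<forall>g \<in> Mor C. Dom C f = Dom C g \<longrightarrow> Cod C f = Cod C g \<longrightarrow>
        Star C (Add C f g) = Add C (Star C f) (Star C g))"

fun mpow :: "('o, 'm) icat \<Rightarrow> 'm \<Rightarrow> nat \<Rightarrow> 'm" where
  "mpow C f 0 = Idm C (Dom C f)"
| "mpow C f (Suc k) = Comp C (mpow C f k) f"

definition is_inverse :: "('o, 'm) icat \<Rightarrow> 'm \<Rightarrow> 'm \<Rightarrow> bool" where
  "is_inverse C f g \<longleftrightarrow> f \<in> Mor C \<and> g \<in> Hom C (Cod C f) (Dom C f)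
     \<and> Comp C f g = Idm C (Dom C f) \<and> Comp C g f = Idm C (Cod C f)"

definition invertible_mor :: "('o, 'm) icat \<Rightarrow> 'm \<Rightarrow> bool" where
  "invertible_mor C f \<longleftrightarrow> (\<exists>g. is_inverse C f g)"

definition annihilator :: "('o, 'm) icat \<Rightarrow> 'm \<Rightarrow> 'o \<Rightarrow> 'm \<Rightarrow> bool" where
  "annihilator C f N eta \<longleftrightarrow> N \<in> Ob C \<and> eta \<in> Hom C N (Dom C f)
     \<and> Comp C eta f = Zero C N (Cod C f)"

definition core_inverse :: "('o, 'm) icat \<Rightarrow> 'm \<Rightarrow> 'm \<Rightarrow> bool" where
  "core_inverse C f x \<longleftrightarrow> x \<in> Hom C (Dom C f) (Dom C f)
     \<and> Star C (Comp C f x) = Comp C f x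
     \<and> Comp C f (Comp C x x) = x
     \<and> Comp C x (Comp C f f) = f"

definition core_invertible :: "('o, 'm) icat \<Rightarrow> 'm \<Rightarrow> bool" where
  "core_invertible C f \<longleftrightarrow> (\<exists>x. core_inverse C f x)"

end

theory Submission
  imports Defs "HOL-Algebra.Ring"
begin

text \<open>
  All the algebra takes place in the endomorphism ring of X, which is a ring with
  involution; an annihilator \<eta> of \<phi> enters only through the Hermitian element
  e = \<eta>*\<eta>, which satisfies e\<phi> = 0.

  If \<chi> is the core inverse, p = \<phi>\<chi> is a Hermitian idempotent with p\<phi> = \<phi>, and
  taking \<eta> = 1 - p the element \<phi>^n + \<eta> has the inverse \<chi>^n + (1 - \<chi>\<phi>).
  Conversely, if \<mu> = \<phi>^n + e has an inverse \<nu>, then p = \<phi>^n\<nu> and e\<nu> form a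
  partition of unity; since \<phi>* and p* are killed by e, this gives
  \<phi>*p = \<phi>* and p*p = p*, so p is a Hermitian idempotent fixing \<phi>. Then
  \<chi> = \<phi>^(n-1)\<nu> satisfies \<phi>\<chi> = p, and \<chi>\<phi>^2 = \<phi> follows after
  cancelling \<mu>. Finally, \<chi>e = 0 for any core inverse \<chi>, so \<chi>\<mu> = \<phi>^(n-1),
  which is the formula.
\<close>

lemma (in monoid) mult_inner_inverse:
  assumes "a \<in> carrier G" "x \<in> carrier G"
    and "a \<otimes> (x \<otimes> x) = x" "x \<otimes> (a \<otimes> a) = a"
  shows "a \<otimes> x \<otimes> a = a"
proof -
  have "a \<otimes> x \<otimes> a = a \<otimes> x \<otimes> (x \<otimes> (a \<otimes> a))" using assms(4) by simp
  also have "\<dots> = a \<otimes> (x \<otimes> x) \<otimes> (a \<otimes> a)" using assms(1,2) by (simp add: m_assoc)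
  finally show ?thesis using assms(3,4) by simp
qed

lemma (in monoid) pow_Suc_mult_pow_Suc:
  assumes a: "a \<in> carrier G" and b: "b \<in> carrier G" and ab: "a \<otimes> (b \<otimes> b) = b"
  shows "a [^] Suc k \<otimes> b [^] Suc k = a \<otimes> b"
proof (induction k)
  case 0
  show ?case using a b by simp
next
  case (Suc k)
  have "b [^] Suc (Suc k) = b \<otimes> (b \<otimes> b [^] k)"
    using b by (simp only: nat_pow_Suc2 nat_pow_closed m_closed)
  then have "a \<otimes> b [^] Suc (Suc k) = a \<otimes> (b \<otimes> b) \<otimes> b [^] k"
    using a b by (simp add: m_assoc)
  also have "\<dots> = b [^] Suc k" using ab b by (simp add: nat_pow_Suc2 del: nat_pow_Suc Group.nat_pow_Suc)
  finally have "a \<otimes> b [^] Suc (Suc k) = b [^] Suc k" .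
  then show ?case using Suc a b by (simp add: m_assoc)
qed

lemma (in ring) one_minus_mult_eq_zero:
  assumes "p \<in> carrier R" "r \<in> carrier R" "p \<otimes> r = r"
  shows "(\<one> \<ominus> p) \<otimes> r = \<zero>"
  using assms by (simp add: minus_eq l_distr l_minus r_neg)

lemma (in ring) mult_one_minus_eq_zero:
  assumes "p \<in> carrier R" "r \<in> carrier R" "r \<otimes> p = r"
  shows "r \<otimes> (\<one> \<ominus> p) = \<zero>"
  using assms by (simp add: minus_eq r_distr r_minus r_neg)

lemma (in ring) mult_eq_of_partition_of_unity:
  assumes "p \<in> carrier R" "e \<in> carrier R" "v \<in> carrier R" "r \<in> carrier R"
    and "p \<oplus> e \<otimes> v = \<one>" "r \<otimes> e = \<zero>"
  shows "r \<otimes> p = r"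
proof -
  have "r = r \<otimes> (p \<oplus> e \<otimes> v)" using assms by simp
  also have "\<dots> = r \<otimes> p" using assms(1-4,6) by (simp add: r_distr m_assoc[symmetric])
  finally show ?thesis by simp
qed

text \<open>The hypotheses are symmetric in a and x, so the lemma also yields the product
  in the other order.\<close>
lemma (in ring) pow_add_complement_mult_eq_one:
  assumes a: "a \<in> carrier R" and x: "x \<in> carrier R"
    and axx: "a \<otimes> (x \<otimes> x) = x" and xaa: "x \<otimes> (a \<otimes> a) = a" and n: "1 \<le> (n::nat)"
  shows "(a [^] n \<oplus> (\<one> \<ominus> a \<otimes> x)) \<otimes> (x [^] n \<oplus> (\<one> \<ominus> x \<otimes> a)) = \<one>"
proof -
  obtain k where k: "n = Suc k" using n by (cases n) auto
  define e where "e = \<one> \<ominus> a \<otimes> x"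
  define f where "f = \<one> \<ominus> x \<otimes> a"
  have ef: "e \<in> carrier R" "f \<in> carrier R" unfolding e_def f_def using a x by simp_all
  have axa: "a \<otimes> x \<otimes> a = a" using mult_inner_inverse[OF a x axx xaa] .
  have powers: "a [^] n \<otimes> x [^] n = a \<otimes> x"
    using pow_Suc_mult_pow_Suc[OF a x axx] k by simp
  have "a [^] n \<otimes> (x \<otimes> a) = a [^] n"
    using a x axa k by (simp add: m_assoc[symmetric]) (simp add: m_assoc)
  then have left: "a [^] n \<otimes> f = \<zero>"
    unfolding f_def using a x by (intro mult_one_minus_eq_zero) simp_all
  have "a \<otimes> x \<otimes> x [^] n = a \<otimes> (x \<otimes> x) \<otimes> x [^] k"
    using a x k by (simp add: nat_pow_Suc2 m_assoc del: nat_pow_Suc Group.nat_pow_Suc)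
  also have "\<dots> = x [^] n"
    using x axx k by (simp add: nat_pow_Suc2 del: nat_pow_Suc Group.nat_pow_Suc)
  finally have right: "e \<otimes> x [^] n = \<zero>"
    unfolding e_def using a x by (intro one_minus_mult_eq_zero) simp_all
  have "a \<otimes> x \<otimes> (x \<otimes> a) = a \<otimes> (x \<otimes> x) \<otimes> a" using a x by (simp add: m_assoc)
  then have "e \<otimes> (x \<otimes> a) = \<zero>"
    unfolding e_def using a x axx by (intro one_minus_mult_eq_zero) simp_all
  then have idem: "e \<otimes> f = e"
    unfolding f_def using a x ef by (simp add: minus_eq r_distr r_minus)
  have sum: "a \<otimes> x \<oplus> e = \<one>"
    unfolding e_def using a x by (simp add: minus_eq a_lcomm r_neg)
  show ?thesis
    unfolding e_def[symmetric] f_def[symmetric]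
    using a x ef powers left right idem sum by (simp add: l_distr r_distr)
qed

locale involutive_ring = ring R for R (structure) +
  fixes star :: "'a \<Rightarrow> 'a"
  assumes star_closed [simp]: "x \<in> carrier R \<Longrightarrow> star x \<in> carrier R"
    and star_star [simp]: "x \<in> carrier R \<Longrightarrow> star (star x) = x"
    and star_mult: "\<lbrakk>x \<in> carrier R; y \<in> carrier R\<rbrakk> \<Longrightarrow> star (x \<otimes> y) = star y \<otimes> star x"
    and star_add: "\<lbrakk>x \<in> carrier R; y \<in> carrier R\<rbrakk> \<Longrightarrow> star (x \<oplus> y) = star x \<oplus> star y"
begin

lemma star_zero [simp]: "star \<zero> = \<zero>"
proof -
  have "star \<zero> = star (\<zero> \<otimes> star \<zero>)" by simp
  also have "\<dots> = \<zero> \<otimes> star \<zero>" by (subst star_mult) simp_all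
  finally show ?thesis by simp
qed

lemma star_one [simp]: "star \<one> = \<one>"
proof -
  have "star \<one> = star \<one> \<otimes> star (star \<one>)" by simp
  also have "\<dots> = star (star \<one> \<otimes> \<one>)" by (subst star_mult) simp_all
  finally show ?thesis by simp
qed

lemma star_minus:
  assumes "x \<in> carrier R" "y \<in> carrier R"
  shows "star (x \<ominus> y) = star x \<ominus> star y"
proof -
  have "star (\<ominus> y) \<oplus> star y = \<zero>" using assms by (simp add: star_add[symmetric] l_neg)
  then have "star (\<ominus> y) = \<ominus> star y" using assms by (simp add: minus_equality)
  then show ?thesis using assms by (simp add: minus_eq star_add)
qed

definition is_core_inverse :: "'a \<Rightarrow> 'a \<Rightarrow> bool" where
  "is_core_inverse a x \<longleftrightarrow> x \<in> carrier R \<and> star (a \<otimes> x) = a \<otimes> x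
     \<and> a \<otimes> (x \<otimes> x) = x \<and> x \<otimes> (a \<otimes> a) = a"

lemma core_inverse_complement:
  assumes a: "a \<in> carrier R" and core: "is_core_inverse a x"
  shows "star (\<one> \<ominus> a \<otimes> x) \<otimes> (\<one> \<ominus> a \<otimes> x) = \<one> \<ominus> a \<otimes> x"
    and "(\<one> \<ominus> a \<otimes> x) \<otimes> a = \<zero>"
proof -
  have x: "x \<in> carrier R" and herm: "star (a \<otimes> x) = a \<otimes> x"
    and axx: "a \<otimes> (x \<otimes> x) = x" and xaa: "x \<otimes> (a \<otimes> a) = a"
    using core unfolding is_core_inverse_def by auto
  have axa: "a \<otimes> x \<otimes> a = a" using mult_inner_inverse[OF a x axx xaa] .
  then show "(\<one> \<ominus> a \<otimes> x) \<otimes> a = \<zero>" using a x by (intro one_minus_mult_eq_zero) simp_all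
  have "a \<otimes> x \<otimes> (a \<otimes> x) = a \<otimes> x" using a x axa by (simp add: m_assoc[symmetric])
  then have "(\<one> \<ominus> a \<otimes> x) \<otimes> (a \<otimes> x) = \<zero>" using a x by (intro one_minus_mult_eq_zero) simp_all
  then have "(\<one> \<ominus> a \<otimes> x) \<otimes> (\<one> \<ominus> a \<otimes> x) = \<one> \<ominus> a \<otimes> x"
    using a x by (simp add: minus_eq r_distr r_minus)
  moreover have "star (\<one> \<ominus> a \<otimes> x) = \<one> \<ominus> a \<otimes> x" using a x herm by (simp add: star_minus)
  ultimately show "star (\<one> \<ominus> a \<otimes> x) \<otimes> (\<one> \<ominus> a \<otimes> x) = \<one> \<ominus> a \<otimes> x" by simp
qed

lemma core_inverse_pow_add_complement_Units:
  assumes a: "a \<in> carrier R" and core: "is_core_inverse a x" and n: "1 \<le> (n::nat)"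
  shows "a [^] n \<oplus> (\<one> \<ominus> a \<otimes> x) \<in> Units R"
proof -
  have x: "x \<in> carrier R" and axx: "a \<otimes> (x \<otimes> x) = x" and xaa: "x \<otimes> (a \<otimes> a) = a"
    using core unfolding is_core_inverse_def by auto
  show ?thesis
    unfolding Units_def
    using a x pow_add_complement_mult_eq_one[OF a x axx xaa n]
      pow_add_complement_mult_eq_one[OF x a xaa axx n]
    by blast
qed

lemma core_inverse_eq_pow_mult_inv:
  assumes a: "a \<in> carrier R" and core: "is_core_inverse a x"
    and e: "e \<in> carrier R" "star e = e" "e \<otimes> a = \<zero>"
    and unit: "a [^] n \<oplus> e \<in> Units R" and n: "2 \<le> (n::nat)"
  shows "x = a [^] (n - 1) \<otimes> inv (a [^] n \<oplus> e)"
proof -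
  have x: "x \<in> carrier R" and herm: "star (a \<otimes> x) = a \<otimes> x"
    and axx: "a \<otimes> (x \<otimes> x) = x" and xaa: "x \<otimes> (a \<otimes> a) = a"
    using core unfolding is_core_inverse_def by auto
  define k :: nat where "k = n - 2"
  have nk: "n = Suc (Suc k)" "n - 1 = Suc k" unfolding k_def using n by simp_all
  have "e \<otimes> (a \<otimes> x) = \<zero>" using a x e by (simp add: m_assoc[symmetric])
  then have ae: "a \<otimes> x \<otimes> e = \<zero>" using a x e herm star_mult[of e "a \<otimes> x"] by simp
  have xax: "x \<otimes> (a \<otimes> x) = x"
    using mult_inner_inverse[OF x a xaa axx] a x by (simp add: m_assoc)
  have "x \<otimes> e = x \<otimes> (a \<otimes> x) \<otimes> e" using xax by simp
  also have "\<dots> = x \<otimes> (a \<otimes> x \<otimes> e)" using a x e by (simp add: m_assoc)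
  finally have xe: "x \<otimes> e = \<zero>" using ae x by simp
  have "x \<otimes> a [^] n = x \<otimes> (a \<otimes> a) \<otimes> a [^] k"
    using a x nk by (simp add: nat_pow_Suc2 m_assoc del: nat_pow_Suc Group.nat_pow_Suc)
  also have "\<dots> = a [^] (n - 1)"
    using a xaa nk by (simp add: nat_pow_Suc2 del: nat_pow_Suc Group.nat_pow_Suc)
  finally have "x \<otimes> (a [^] n \<oplus> e) = a [^] (n - 1)" using a x e xe by (simp add: r_distr)
  moreover have "x = x \<otimes> (a [^] n \<oplus> e) \<otimes> inv (a [^] n \<oplus> e)"
    using a x e unit by (simp add: m_assoc)
  ultimately show ?thesis by simp
qed

lemma partition_of_unity_hermitian:
  assumes a: "a \<in> carrier R" and p: "p \<in> carrier R" and e: "e \<in> carrier R"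
    and v: "v \<in> carrier R" and e_herm: "star e = e"
    and partition: "p \<oplus> e \<otimes> v = \<one>" and ea: "e \<otimes> a = \<zero>" and ep: "e \<otimes> p = \<zero>"
  shows "star p = p" and "p \<otimes> a = a"
proof -
  have "star p \<otimes> e = \<zero>" using e p e_herm ep star_mult[of e p] by simp
  then have "star p \<otimes> p = star p" using mult_eq_of_partition_of_unity[OF p e v _ partition] p by simp
  then show p_herm: "star p = p" using p star_mult[of "star p" p] by (metis star_closed star_star)
  have "star a \<otimes> e = \<zero>" using a e ea e_herm star_mult[of e a] by simp
  then have "star a \<otimes> p = star a" using mult_eq_of_partition_of_unity[OF p e v _ partition] a by simp
  then show "p \<otimes> a = a" using a p p_herm star_mult[of "star a" p] by simp
qed

lemma Units_imp_core_inverse: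
  assumes a: "a \<in> carrier R"
    and e: "e \<in> carrier R" and e_herm: "star e = e" and ea: "e \<otimes> a = \<zero>"
    and unit: "a [^] n \<oplus> e \<in> Units R" and n: "2 \<le> (n::nat)"
  shows "is_core_inverse a (a [^] (n - 1) \<otimes> inv (a [^] n \<oplus> e))"
proof -
  define k :: nat where "k = n - 2"
  have nk: "n = Suc (Suc k)" "n - 1 = Suc k" unfolding k_def using n by simp_all
  define \<mu> where "\<mu> = a [^] n \<oplus> e"
  define \<nu> where "\<nu> = inv \<mu>"
  define p where "p = a [^] n \<otimes> \<nu>"
  have \<mu>: "\<mu> \<in> Units R" using unit unfolding \<mu>_def .
  have \<nu>: "\<nu> \<in> carrier R" unfolding \<nu>_def using \<mu> by simp
  have p: "p \<in> carrier R" unfolding p_def using a \<nu> by simp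
  have "p \<oplus> e \<otimes> \<nu> = \<mu> \<otimes> \<nu>" unfolding p_def \<mu>_def using a e \<nu> by (simp add: l_distr)
  also have "\<dots> = \<one>" unfolding \<nu>_def using \<mu> by simp
  finally have partition: "p \<oplus> e \<otimes> \<nu> = \<one>" .
  have e_pow: "e \<otimes> a [^] Suc m = \<zero>" for m
    using a e ea by (simp add: nat_pow_Suc2 m_assoc[symmetric] del: nat_pow_Suc Group.nat_pow_Suc)
  have "e \<otimes> p = \<zero>" unfolding p_def using e_pow[of "Suc k"] a e \<nu> nk by (simp add: m_assoc[symmetric])
  note p_herm = partition_of_unity_hermitian(1)[OF a p e \<nu> e_herm partition ea this]
    and pa = partition_of_unity_hermitian(2)[OF a p e \<nu> e_herm partition ea this]
  define x where "x = a [^] (n - 1) \<otimes> \<nu>"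
  have x: "x \<in> carrier R" unfolding x_def using a \<nu> by simp
  have ax: "a \<otimes> x = p"
    unfolding x_def p_def using a \<nu> nk by (simp add: m_assoc[symmetric] nat_pow_Suc2 del: nat_pow_Suc Group.nat_pow_Suc)
  have p_pow: "p \<otimes> a [^] (n - 1) = a [^] (n - 1)"
    using a p pa nk by (simp add: nat_pow_Suc2 m_assoc[symmetric] del: nat_pow_Suc Group.nat_pow_Suc)
  have axx: "a \<otimes> (x \<otimes> x) = x"
    using a x \<nu> ax p_pow unfolding x_def by (simp add: m_assoc[symmetric])
  have "\<mu> \<otimes> x = a [^] (n - 1) \<otimes> p"
  proof -
    have "\<mu> \<otimes> x = a [^] n \<otimes> a [^] (n - 1) \<otimes> \<nu> \<oplus> e \<otimes> a [^] (n - 1) \<otimes> \<nu>"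
      unfolding \<mu>_def x_def using a e \<nu> by (simp add: l_distr m_assoc)
    also have "\<dots> = a [^] (n - 1) \<otimes> p"
      unfolding p_def using a \<nu> e_pow[of k] nk(2) nat_pow_comm[OF a, of n "n - 1"] by (simp add: m_assoc)
    finally show ?thesis .
  qed
  \<comment> \<open>both sides below equal \<mu> a = a^(n+1); then cancel the unit \<mu>\<close>
  then have "\<mu> \<otimes> (x \<otimes> (a \<otimes> a)) = a [^] (n - 1) \<otimes> (p \<otimes> a) \<otimes> a"
    using a x p \<mu> by (simp add: m_assoc[symmetric] Units_closed)
  also have "\<dots> = \<mu> \<otimes> a"
    unfolding \<mu>_def using a e ea pa nk by (simp add: l_distr)
  finally have xaa: "x \<otimes> (a \<otimes> a) = a" using a x \<mu> by simp
  show ?thesis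
    unfolding is_core_inverse_def x_def[symmetric] \<nu>_def[symmetric] \<mu>_def[symmetric]
    using x ax p_herm axx xaa by simp
qed

end

lemma is_categoryD:
  assumes "is_category C"
  shows "f \<in> Hom C A B \<Longrightarrow> A \<in> Ob C \<and> B \<in> Ob C"
    and "A \<in> Ob C \<Longrightarrow> Idm C A \<in> Hom C A A"
    and "f \<in> Hom C A B \<Longrightarrow> g \<in> Hom C B D \<Longrightarrow> Comp C f g \<in> Hom C A D"
    and "f \<in> Hom C A B \<Longrightarrow> g \<in> Hom C B D \<Longrightarrow> h \<in> Hom C D E \<Longrightarrow>
           Comp C (Comp C f g) h = Comp C f (Comp C g h)"
    and "f \<in> Hom C A B \<Longrightarrow> Comp C (Idm C A) f = f"
    and "f \<in> Hom C A B \<Longrightarrow> Comp C f (Idm C B) = f"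
  using assms unfolding is_category_def Hom_def by auto

lemma is_preadditiveD:
  assumes "is_preadditive C" and "A \<in> Ob C" "B \<in> Ob C"
  shows "Zero C A B \<in> Hom C A B"
    and "f \<in> Hom C A B \<Longrightarrow> g \<in> Hom C A B \<Longrightarrow> Add C f g \<in> Hom C A B"
    and "f \<in> Hom C A B \<Longrightarrow> Neg C f \<in> Hom C A B"
    and "f \<in> Hom C A B \<Longrightarrow> g \<in> Hom C A B \<Longrightarrow> h \<in> Hom C A B \<Longrightarrow>
           Add C (Add C f g) h = Add C f (Add C g h)"
    and "f \<in> Hom C A B \<Longrightarrow> g \<in> Hom C A B \<Longrightarrow> Add C f g = Add C g f"
    and "f \<in> Hom C A B \<Longrightarrow> Add C (Zero C A B) f = f"
    and "f \<in> Hom C A B \<Longrightarrow> Add C (Neg C f) f = Zero C A B"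
  using assms unfolding is_preadditive_def by blast+

lemma is_preadditive_distrib:
  assumes "is_preadditive C"
  shows "f \<in> Hom C A B \<Longrightarrow> g \<in> Hom C A B \<Longrightarrow> h \<in> Hom C B D \<Longrightarrow>
           Comp C (Add C f g) h = Add C (Comp C f h) (Comp C g h)"
    and "h \<in> Hom C D A \<Longrightarrow> f \<in> Hom C A B \<Longrightarrow> g \<in> Hom C A B \<Longrightarrow>
           Comp C h (Add C f g) = Add C (Comp C h f) (Comp C h g)"
  using assms unfolding is_preadditive_def Hom_def by auto

lemma is_involutive_additiveD:
  assumes "is_involutive_additive C"
  shows "f \<in> Hom C A B \<Longrightarrow> Star C f \<in> Hom C B A"
    and "f \<in> Hom C A B \<Longrightarrow> Star C (Star C f) = f"
    and "f \<in> Hom C A B \<Longrightarrow> g \<in> Hom C B D \<Longrightarrow> Star C (Comp C f g) = Comp C (Star C g) (Star C f)"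
    and "f \<in> Hom C A B \<Longrightarrow> g \<in> Hom C A B \<Longrightarrow> Star C (Add C f g) = Add C (Star C f) (Star C g)"
  using assms unfolding is_involutive_additive_def Hom_def by auto

definition endo_ring :: "('o, 'm) icat \<Rightarrow> 'o \<Rightarrow> 'm ring" where
  "endo_ring C X = \<lparr>carrier = Hom C X X, monoid.mult = Comp C, one = Idm C X,
     zero = Zero C X X, add = Add C\<rparr>"

lemma endo_ring_simps [simp]:
  "carrier (endo_ring C X) = Hom C X X"
  "mult (endo_ring C X) = Comp C"
  "one (endo_ring C X) = Idm C X"
  "zero (endo_ring C X) = Zero C X X"
  "add (endo_ring C X) = Add C"
  by (simp_all add: endo_ring_def)

lemma ring_endo_ring:
  assumes C: "is_preadditive C" and X: "X \<in> Ob C"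
  shows "ring (endo_ring C X)"
proof -
  have cat: "is_category C" using C unfolding is_preadditive_def by blast
  note grp = is_preadditiveD[OF C X X]
  show ?thesis
  proof (rule ringI)
    show "abelian_group (endo_ring C X)"
    proof (rule abelian_groupI)
      fix x assume "x \<in> carrier (endo_ring C X)"
      then show "\<exists>y \<in> carrier (endo_ring C X). y \<oplus>\<^bsub>endo_ring C X\<^esub> x = \<zero>\<^bsub>endo_ring C X\<^esub>"
        using grp(3,7) by auto
    qed (auto simp: grp(1,2,4,6) intro: grp(5))
    show "monoid (endo_ring C X)"
      by (rule monoidI) (simp_all add: is_categoryD[OF cat] X)
  qed (simp_all add: is_preadditive_distrib[OF C])
qed

lemma is_involutive_additive_imp_preadditive:
  "is_involutive_additive C \<Longrightarrow> is_preadditive C"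
  unfolding is_involutive_additive_def is_additive_def by (rule conjunct1[OF conjunct1])

lemma involutive_ring_endo_ring:
  assumes C: "is_involutive_additive C" and X: "X \<in> Ob C"
  shows "involutive_ring (endo_ring C X) (Star C)"
proof (intro involutive_ring.intro involutive_ring_axioms.intro)
  show "ring (endo_ring C X)"
    using is_involutive_additive_imp_preadditive[OF C] X by (rule ring_endo_ring)
next
  fix x y assume "x \<in> carrier (endo_ring C X)" "y \<in> carrier (endo_ring C X)"
  then have x: "x \<in> Hom C X X" and y: "y \<in> Hom C X X" by simp_all
  show "Star C x \<in> carrier (endo_ring C X)" using is_involutive_additiveD(1)[OF C x] by simp
  show "Star C (Star C x) = x" using is_involutive_additiveD(2)[OF C x] .
  show "Star C (x \<otimes>\<^bsub>endo_ring C X\<^esub> y) = Star C y \<otimes>\<^bsub>endo_ring C X\<^esub> Star C x"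
    using is_involutive_additiveD(3)[OF C x y] by simp
  show "Star C (x \<oplus>\<^bsub>endo_ring C X\<^esub> y) = Star C x \<oplus>\<^bsub>endo_ring C X\<^esub> Star C y"
    using is_involutive_additiveD(4)[OF C x y] by simp
qed

lemma mpow_eq_nat_pow:
  assumes "a \<in> Hom C X X"
  shows "mpow C a k = a [^]\<^bsub>endo_ring C X\<^esub> k"
  using assms by (induction k) (simp_all add: Hom_def)

lemma comp_Zero:
  assumes C: "is_preadditive C" and f: "f \<in> Hom C A B" and D: "D \<in> Ob C"
  shows "Comp C f (Zero C B D) = Zero C A D"
proof -
  have cat: "is_category C" using C unfolding is_preadditive_def by blast
  have A: "A \<in> Ob C" and B: "B \<in> Ob C" using is_categoryD(1)[OF cat f] by auto
  note AD = is_preadditiveD[OF C A D] and BD = is_preadditiveD[OF C B D]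
  define z where "z = Comp C f (Zero C B D)"
  have z: "z \<in> Hom C A D" unfolding z_def using is_categoryD(3)[OF cat f BD(1)] .
  have "Add C z z = Comp C f (Add C (Zero C B D) (Zero C B D))"
    unfolding z_def using is_preadditive_distrib(2)[OF C f BD(1) BD(1)] by simp
  then have zz: "Add C z z = z" unfolding z_def using BD(1,6) by simp
  have "Zero C A D = Add C (Neg C z) z" using AD(7)[OF z] by simp
  also have "\<dots> = Add C (Neg C z) (Add C z z)" using zz by simp
  also have "\<dots> = Add C (Add C (Neg C z) z) z" by (rule AD(4)[OF AD(3)[OF z] z z, symmetric])
  also have "\<dots> = z" using AD(6)[OF z] AD(7)[OF z] by simp
  finally show ?thesis unfolding z_def by simp
qed

lemma is_inverse_iff_Units:
  assumes C: "is_preadditive C" and X: "X \<in> Ob C" and m: "m \<in> Hom C X X"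
  shows "is_inverse C m \<nu> \<longleftrightarrow> m \<in> Units (endo_ring C X) \<and> \<nu> = inv\<^bsub>endo_ring C X\<^esub> m"
proof -
  interpret E: ring "endo_ring C X" using C X by (rule ring_endo_ring)
  have "is_inverse C m \<nu> \<longleftrightarrow> \<nu> \<in> Hom C X X \<and> Comp C m \<nu> = Idm C X \<and> Comp C \<nu> m = Idm C X"
    using m unfolding is_inverse_def Hom_def by auto
  also have "\<dots> \<longleftrightarrow> m \<in> Units (endo_ring C X) \<and> \<nu> = inv\<^bsub>endo_ring C X\<^esub> m"
  proof
    assume "\<nu> \<in> Hom C X X \<and> Comp C m \<nu> = Idm C X \<and> Comp C \<nu> m = Idm C X"
    then show "m \<in> Units (endo_ring C X) \<and> \<nu> = inv\<^bsub>endo_ring C X\<^esub> m"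
      using m E.inv_unique'[of m \<nu>] unfolding Units_def by auto
  next
    assume "m \<in> Units (endo_ring C X) \<and> \<nu> = inv\<^bsub>endo_ring C X\<^esub> m"
    then show "\<nu> \<in> Hom C X X \<and> Comp C m \<nu> = Idm C X \<and> Comp C \<nu> m = Idm C X"
      using E.Units_inv_closed E.Units_r_inv E.Units_l_inv by fastforce
  qed
  finally show ?thesis .
qed

lemma core_inverse_iff_is_core_inverse:
  assumes C: "is_involutive_additive C" and X: "X \<in> Ob C" and a: "a \<in> Hom C X X"
  shows "core_inverse C a x \<longleftrightarrow> involutive_ring.is_core_inverse (endo_ring C X) (Star C) a x"
proof -
  interpret E: involutive_ring "endo_ring C X" "Star C" using C X by (rule involutive_ring_endo_ring)
  show ?thesis using a by (simp add: core_inverse_def E.is_core_inverse_def Hom_def)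
qed

lemma annihilator_gram:
  assumes C: "is_involutive_additive C" and X: "X \<in> Ob C" and a: "a \<in> Hom C X X"
    and ann: "annihilator C a N \<eta>"
  shows "Comp C (Star C \<eta>) \<eta> \<in> Hom C X X"
    and "Star C (Comp C (Star C \<eta>) \<eta>) = Comp C (Star C \<eta>) \<eta>"
    and "Comp C (Comp C (Star C \<eta>) \<eta>) a = Zero C X X"
proof -
  have pre: "is_preadditive C" using is_involutive_additive_imp_preadditive[OF C] .
  have cat: "is_category C" using pre unfolding is_preadditive_def by (rule conjunct1)
  have \<eta>: "\<eta> \<in> Hom C N X" and \<eta>a: "Comp C \<eta> a = Zero C N X"
    using ann a unfolding annihilator_def Hom_def by auto
  have \<eta>': "Star C \<eta> \<in> Hom C X N" using is_involutive_additiveD(1)[OF C \<eta>] .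
  show "Comp C (Star C \<eta>) \<eta> \<in> Hom C X X" using is_categoryD(3)[OF cat \<eta>' \<eta>] .
  show "Star C (Comp C (Star C \<eta>) \<eta>) = Comp C (Star C \<eta>) \<eta>"
    using is_involutive_additiveD(2,3)[OF C] \<eta> \<eta>' by simp
  have "Comp C (Comp C (Star C \<eta>) \<eta>) a = Comp C (Star C \<eta>) (Zero C N X)"
    using is_categoryD(4)[OF cat \<eta>' \<eta> a] \<eta>a by simp
  also have "\<dots> = Zero C X X" using comp_Zero[OF pre \<eta>' X] .
  finally show "Comp C (Comp C (Star C \<eta>) \<eta>) a = Zero C X X" .
qed

lemma core_inverse_imp_annihilator_invertible:
  assumes C: "is_involutive_additive C" and X: "X \<in> Ob C" and a: "a \<in> Hom C X X"
    and core: "core_inverse C a x" and n: "1 \<le> n"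
  shows "\<exists>N \<eta>. annihilator C a N \<eta> \<and> invertible_mor C (Add C (mpow C a n) (Comp C (Star C \<eta>) \<eta>))"
proof -
  interpret E: involutive_ring "endo_ring C X" "Star C" using C X by (rule involutive_ring_endo_ring)
  have core': "E.is_core_inverse a x" using core core_inverse_iff_is_core_inverse[OF C X a] by simp
  then have x: "x \<in> Hom C X X" unfolding E.is_core_inverse_def by simp
  define \<eta> where "\<eta> = \<one>\<^bsub>endo_ring C X\<^esub> \<ominus>\<^bsub>endo_ring C X\<^esub> Comp C a x"
  have \<eta>: "\<eta> \<in> Hom C X X"
    unfolding \<eta>_def using a x E.minus_closed[simplified] E.one_closed[simplified] E.m_closed[simplified]
    by simp
  have gram: "Comp C (Star C \<eta>) \<eta> = \<eta>"
    using E.core_inverse_complement(1)[OF _ core'] a unfolding \<eta>_def by simp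
  have "Comp C \<eta> a = Zero C X X"
    using E.core_inverse_complement(2)[OF _ core'] a unfolding \<eta>_def by simp
  then have ann: "annihilator C a X \<eta>" using X a \<eta> unfolding annihilator_def Hom_def by simp
  have unit: "Add C (mpow C a n) \<eta> \<in> Units (endo_ring C X)"
    using E.core_inverse_pow_add_complement_Units[OF _ core' n] a
    unfolding \<eta>_def mpow_eq_nat_pow[OF a] by simp
  then have "is_inverse C (Add C (mpow C a n) \<eta>) (inv\<^bsub>endo_ring C X\<^esub> (Add C (mpow C a n) \<eta>))"
    using is_inverse_iff_Units[OF is_involutive_additive_imp_preadditive[OF C] X
        E.Units_closed[simplified, OF unit]]
    by simp
  then show ?thesis using ann gram unfolding invertible_mor_def by metis
qed

lemma annihilator_inverse_Units:
  assumes C: "is_involutive_additive C" and X: "X \<in> Ob C" and a: "a \<in> Hom C X X"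
    and ann: "annihilator C a N \<eta>"
    and inverse: "is_inverse C (Add C (mpow C a n) (Comp C (Star C \<eta>) \<eta>)) \<nu>"
  shows "Add C (mpow C a n) (Comp C (Star C \<eta>) \<eta>) \<in> Units (endo_ring C X)"
    and "\<nu> = inv\<^bsub>endo_ring C X\<^esub> (Add C (mpow C a n) (Comp C (Star C \<eta>) \<eta>))"
proof -
  interpret E: involutive_ring "endo_ring C X" "Star C" using C X by (rule involutive_ring_endo_ring)
  have "Add C (mpow C a n) (Comp C (Star C \<eta>) \<eta>) \<in> Hom C X X"
    using annihilator_gram(1)[OF C X a ann] a E.add.m_closed[simplified] E.nat_pow_closed[simplified]
    by (simp add: mpow_eq_nat_pow[OF a])
  then show "Add C (mpow C a n) (Comp C (Star C \<eta>) \<eta>) \<in> Units (endo_ring C X)"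
    and "\<nu> = inv\<^bsub>endo_ring C X\<^esub> (Add C (mpow C a n) (Comp C (Star C \<eta>) \<eta>))"
    using inverse is_inverse_iff_Units[OF is_involutive_additive_imp_preadditive[OF C] X] by blast+
qed

lemma annihilator_invertible_imp_core_inverse:
  assumes C: "is_involutive_additive C" and X: "X \<in> Ob C" and a: "a \<in> Hom C X X"
    and ann: "annihilator C a N \<eta>"
    and inverse: "is_inverse C (Add C (mpow C a n) (Comp C (Star C \<eta>) \<eta>)) \<nu>" and n: "2 \<le> n"
  shows "core_inverse C a (Comp C (mpow C a (n - 1)) \<nu>)"
proof -
  interpret E: involutive_ring "endo_ring C X" "Star C" using C X by (rule involutive_ring_endo_ring)
  note gram = annihilator_gram[OF C X a ann]
  note unit = annihilator_inverse_Units[OF C X a ann inverse]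
  show ?thesis
    using E.Units_imp_core_inverse[simplified, OF a gram unit(1)[unfolded mpow_eq_nat_pow[OF a]] n] unit(2)
    by (simp add: core_inverse_iff_is_core_inverse[OF C X a] mpow_eq_nat_pow[OF a])
qed

lemma core_inverse_eq_annihilator_inverse:
  assumes C: "is_involutive_additive C" and X: "X \<in> Ob C" and a: "a \<in> Hom C X X"
    and core: "core_inverse C a x" and ann: "annihilator C a N \<eta>"
    and inverse: "is_inverse C (Add C (mpow C a n) (Comp C (Star C \<eta>) \<eta>)) \<nu>" and n: "2 \<le> n"
  shows "x = Comp C (mpow C a (n - 1)) \<nu>"
proof -
  interpret E: involutive_ring "endo_ring C X" "Star C" using C X by (rule involutive_ring_endo_ring)
  note gram = annihilator_gram[OF C X a ann]
  note unit = annihilator_inverse_Units[OF C X a ann inverse]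
  show ?thesis
    using E.core_inverse_eq_pow_mult_inv[simplified, OF a _ gram unit(1)[unfolded mpow_eq_nat_pow[OF a]] n] unit(2) core
    by (simp add: core_inverse_iff_is_core_inverse[OF C X a] mpow_eq_nat_pow[OF a])
qed

theorem theorem2p8:
  fixes C :: "('o, 'm) icat" and X :: 'o and phi :: 'm and n :: nat
  assumes "is_involutive_additive C"
    and "X \<in> Ob C" and "phi \<in> Hom C X X" and "n \<ge> 2"
  shows "(core_invertible C phi \<longleftrightarrow>
           (\<exists>N eta. annihilator C phi N eta
              \<and> invertible_mor C (Add C (mpow C phi n) (Comp C (Star C eta) eta))))
       \<and> (\<forall>N eta chi nu. core_inverse C phi chi \<longrightarrow> annihilator C phi N eta \<longrightarrow>
           is_inverse C (Add C (mpow C phi n) (Comp C (Star C eta) eta)) nu \<longrightarrow>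
           chi = Comp C (mpow C phi (n - 1)) nu)"
proof (intro conjI iffI allI impI)
  assume "core_invertible C phi"
  then obtain chi where "core_inverse C phi chi" unfolding core_invertible_def ..
  moreover have "1 \<le> n" using assms(4) by simp
  ultimately show "\<exists>N eta. annihilator C phi N eta
      \<and> invertible_mor C (Add C (mpow C phi n) (Comp C (Star C eta) eta))"
    by (rule core_inverse_imp_annihilator_invertible[OF assms(1-3)])
next
  assume "\<exists>N eta. annihilator C phi N eta
      \<and> invertible_mor C (Add C (mpow C phi n) (Comp C (Star C eta) eta))"
  then obtain N eta nu where "annihilator C phi N eta"
    and "is_inverse C (Add C (mpow C phi n) (Comp C (Star C eta) eta)) nu"
    unfolding invertible_mor_def by blast
  then have "core_inverse C phi (Comp C (mpow C phi (n - 1)) nu)"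
    by (rule annihilator_invertible_imp_core_inverse[OF assms(1-3) _ _ assms(4)])
  then show "core_invertible C phi" unfolding core_invertible_def ..
next
  fix N eta chi nu
  assume "core_inverse C phi chi" "annihilator C phi N eta"
    "is_inverse C (Add C (mpow C phi n) (Comp C (Star C eta) eta)) nu"
  then show "chi = Comp C (mpow C phi (n - 1)) nu"
    by (rule core_inverse_eq_annihilator_inverse[OF assms(1-3) _ _ _ assms(4)])
qed

end
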